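(* Let $\nu\in(\frac12,1]$. Let $x\in\mathrm{dom}(\mathcal R)$ satisfy $\mathcal R(x)=\inf\{\mathcal R(z):z\in\mathbb X,\ Az=Ax\}$, and for every $\alpha>0$ let $x_\alpha\in R_\alpha(Ax)$ be any selection. The following are equivalent: (i) there is $c_1>0$ with $\|Ax-Ax_\alpha\|_{\mathbb Y}\le c_1\alpha^\nu$ for all $\alpha>0$; (ii) there is $c_2>0$ with $\sigma_x(\alpha)\le c_2\alpha^{2\nu-1}$ for all $\alpha>0$; (iii) there is $c_3>0$ with $\mathcal R(x)-\mathcal R(z)\le c_3\|Ax-Az\|_{\mathbb Y}^{\frac{2\nu-1}{\nu}}$ for all $z\in\mathbb X$. More precisely, (i) implies (ii) with $c_2=\frac{c_1^2}{4\nu-2}$, (ii) implies (iii) with $c_3=2c_2^{\frac1{2\nu}}$, and (iii) implies (i) with $c_1=c_3^\nu$.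
   Context: Standing setting: $\mathbb X$ is a real Banach space and $\tau$ a topology on $\mathbb X$ such that $(\mathbb X,\tau)$ is locally convex Hausdorff. $\mathcal R:\mathbb X\to(-\infty,\infty]$ is proper and convex with $\tau$-compact sublevel sets $\{\mathcal R\le\lambda\}$ for all $\lambda\in\mathbb R$. $\mathbb Y$ is a real Hilbert space and $A:\mathbb X\to\mathbb Y$ is linear and $\tau$-to-weak continuous. $T_\alpha(x,g):=\frac1{2\alpha}\|g-Ax\|_{\mathbb Y}^2+\mathcal R(x)$ and $R_\alpha(g):=\operatorname{argmin}_{x\in\mathrm{dom}(\mathcal R)}T_\alpha(x,g)$ for $\alpha>0$, $g\in\mathbb Y$. The defect of the Tikhonov functional is $\sigma_x(\alpha):=T_\alpha(x,Ax)-T_\alpha(x_\alpha,Ax)=\mathcal R(x)-\mathcal R(x_\alpha)-\frac1{2\alpha}\|Ax-Ax_\alpha\|^2_{\mathbb Y}$. *)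

theory Defs
  imports "HOL-Analysis.Analysis"
begin

definition locally_convex_hausdorff :: "('a::real_vector) topology \<Rightarrow> bool" where
  "locally_convex_hausdorff \<tau> \<longleftrightarrow>
     topspace \<tau> = UNIV \<and>
     Hausdorff_space \<tau> \<and>
     continuous_map (prod_topology \<tau> \<tau>) \<tau> (\<lambda>(x, y). x + y) \<and>
     continuous_map (prod_topology euclideanreal \<tau>) \<tau> (\<lambda>(c, x). c *\<^sub>R x) \<and>
     (\<forall>x U. openin \<tau> U \<and> x \<in> U \<longrightarrow> (\<exists>V. openin \<tau> V \<and> convex V \<and> x \<in> V \<and> V \<subseteq> U))"

definition weak_topology :: "('b::real_inner) topology" where
  "weak_topology = topology_generated_by {{y. y \<bullet> v \<in> U} | v U. open (U :: real set)}"

definition effdom :: "('a \<Rightarrow> ereal) \<Rightarrow> 'a set" where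
  "effdom R = {x. R x < \<infinity>}"

definition proper_fun :: "('a \<Rightarrow> ereal) \<Rightarrow> bool" where
  "proper_fun R \<longleftrightarrow> (\<forall>x. R x \<noteq> -\<infinity>) \<and> (\<exists>x. R x \<noteq> \<infinity>)"

definition convex_ereal_fun :: "('a::real_vector \<Rightarrow> ereal) \<Rightarrow> bool" where
  "convex_ereal_fun R \<longleftrightarrow>
     (\<forall>x y t. 0 < t \<and> t < 1 \<longrightarrow>
        R ((1 - t) *\<^sub>R x + t *\<^sub>R y) \<le> ereal (1 - t) * R x + ereal t * R y)"

definition tikhonov :: "('a \<Rightarrow> ereal) \<Rightarrow> ('a \<Rightarrow> 'b::real_normed_vector) \<Rightarrow> real \<Rightarrow> 'a \<Rightarrow> 'b \<Rightarrow> ereal" where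
  "tikhonov R A \<alpha> x g = ereal (1 / (2 * \<alpha>) * (norm (g - A x))\<^sup>2) + R x"

definition tik_argmin :: "('a \<Rightarrow> ereal) \<Rightarrow> ('a \<Rightarrow> 'b::real_normed_vector) \<Rightarrow> real \<Rightarrow> 'b \<Rightarrow> 'a set" where
  "tik_argmin R A \<alpha> g =
     {x \<in> effdom R. \<forall>z \<in> effdom R. tikhonov R A \<alpha> x g \<le> tikhonov R A \<alpha> z g}"

definition tik_defect :: "('a \<Rightarrow> ereal) \<Rightarrow> ('a \<Rightarrow> 'b::real_normed_vector) \<Rightarrow> 'a \<Rightarrow> (real \<Rightarrow> 'a) \<Rightarrow> real \<Rightarrow> ereal" where
  "tik_defect R A x xa \<alpha> = tikhonov R A \<alpha> x (A x) - tikhonov R A \<alpha> (xa \<alpha>) (A x)"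

end

theory Submission
  imports Defs
begin

text \<open>
  Let \<open>\<Phi>(\<alpha>)\<close> be the minimal value of the Tikhonov functional, so that the defect is
  \<open>R(x) - \<Phi>(\<alpha>)\<close>.

  (i) \<open>\<Longrightarrow>\<close> (ii): the minimiser at \<open>\<alpha>\<close> is a competitor at \<open>\<alpha>/q\<close>, so
  \<open>\<Phi>(\<alpha>/q) - \<Phi>(\<alpha>) \<le> (q - 1)/(2\<alpha>) \<parallel>Ax - Ax\<^sub>\<alpha>\<parallel>\<^sup>2\<close>. Summing along the grid
  \<open>\<alpha>/q\<^sup>k\<close> gives a geometric series, and \<open>\<Phi>(\<alpha>/q\<^sup>k)\<close> eventually exceeds \<open>R(x) - \<epsilon>\<close>:
  otherwise a compact sublevel set \<open>{R \<le> R(x) - \<epsilon>}\<close> would contain points whose images approach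
  \<open>Ax\<close>; as \<open>A\<close> maps \<open>\<tau>\<close>-compact sets to norm-closed sets, it would contain a preimage of
  \<open>Ax\<close>, contradicting the minimality of \<open>R(x)\<close>. Letting \<open>q \<rightarrow> 1\<close> gives the sharp constant
  \<open>c\<^sub>1\<^sup>2/(4\<nu> - 2)\<close>.

  (ii) \<open>\<Longrightarrow>\<close> (iii): \<open>T\<^sub>\<alpha>(x\<^sub>\<alpha>, Ax) \<le> T\<^sub>\<alpha>(z, Ax)\<close> gives
  \<open>R(x) - R(z) \<le> \<sigma>\<^sub>x(\<alpha>) + \<parallel>Ax - Az\<parallel>\<^sup>2/(2\<alpha>)\<close>, and \<open>\<alpha>\<close> is chosen to balance the two terms.

  (iii) \<open>\<Longrightarrow>\<close> (i): comparing \<open>x\<^sub>\<alpha>\<close> with the convex combinations \<open>(1 - t)x\<^sub>\<alpha> + tx\<close> and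
  letting \<open>t \<rightarrow> 0\<close> gives \<open>\<parallel>Ax - Ax\<^sub>\<alpha>\<parallel>\<^sup>2/\<alpha> \<le> R(x) - R(x\<^sub>\<alpha>)\<close>, which together with (iii) can be
  solved for \<open>\<parallel>Ax - Ax\<^sub>\<alpha>\<parallel>\<close>.
\<close>

lemma topspace_weak_topology [simp]: "topspace (weak_topology :: 'b::real_inner topology) = UNIV"
proof -
  have "{y::'b. y \<bullet> 0 \<in> UNIV} \<in> {{y. y \<bullet> v \<in> U} | v U. open (U :: real set)}"
    by (intro CollectI exI[of _ 0] exI[of _ UNIV]) simp
  then show ?thesis
    unfolding weak_topology_def topology_generated_by_topspace by auto
qed

lemma openin_weak_halfspace_gt: "openin weak_topology {y::'b::real_inner. c < y \<bullet> v}"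
proof -
  have "{y. y \<bullet> v \<in> {c<..}} \<in> {{y::'b. y \<bullet> v \<in> U} | v U. open (U :: real set)}"
    by (intro CollectI exI[of _ v] exI[of _ "{c<..}"]) simp
  then show ?thesis
    unfolding weak_topology_def by (auto intro: topology_generated_by_Basis)
qed

lemma closedin_weak_halfspace_le: "closedin weak_topology {y::'b::real_inner. y \<bullet> v \<le> c}"
proof -
  have "{y::'b. y \<bullet> v \<le> c} = UNIV - {y. c < y \<bullet> v}" by auto
  then show ?thesis
    using openin_weak_halfspace_gt by (simp add: closedin_def Diff_Diff_Int)
qed

lemma cball_eq_Inter_halfspaces:
  fixes b :: "'b::real_inner"
  assumes "0 \<le> r"
  shows "cball b r = (\<Inter>v. {y. y \<bullet> v \<le> r * norm v + b \<bullet> v})"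
proof (intro set_eqI iffI)
  fix y assume "y \<in> cball b r"
  then have "(y - b) \<bullet> v \<le> r * norm v" for v
    using norm_cauchy_schwarz[of "y - b" v] mult_right_mono[of "norm (y - b)" r "norm v"]
    by (simp add: dist_norm norm_minus_commute)
  then show "y \<in> (\<Inter>v. {y. y \<bullet> v \<le> r * norm v + b \<bullet> v})"
    by (simp add: inner_diff_left diff_le_eq add.commute)
next
  fix y assume "y \<in> (\<Inter>v. {y. y \<bullet> v \<le> r * norm v + b \<bullet> v})"
  then have "y \<bullet> (y - b) \<le> r * norm (y - b) + b \<bullet> (y - b)"
    by blast
  then have "(y - b) \<bullet> (y - b) \<le> r * norm (y - b)"
    by (simp only: inner_diff_left)
  then have "norm (y - b) * norm (y - b) \<le> r * norm (y - b)"
    by (simp add: power2_norm_eq_inner flip: power2_eq_square)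
  then have "norm (y - b) \<le> r"
    using assms mult_right_le_imp_le[of "norm (y - b)" "norm (y - b)" r] by fastforce
  then show "y \<in> cball b r"
    by (simp add: dist_norm norm_minus_commute)
qed

lemma closedin_weak_cball: "closedin weak_topology (cball (b::'b::real_inner) r)"
proof (cases "0 \<le> r")
  case True
  then show ?thesis
    unfolding cball_eq_Inter_halfspaces[OF True]
    by (intro closedin_Inter) (auto intro: closedin_weak_halfspace_le)
qed simp

lemma compactin_Int_Inter_decseq_nonempty:
  assumes K: "compactin X K" and closed: "\<And>n. closedin X (C n)" and dec: "decseq C"
    and meets: "\<And>n. K \<inter> C n \<noteq> {}"
  shows "K \<inter> \<Inter>(range C) \<noteq> {}"
proof -
  have "K \<inter> \<Inter>\<F> \<noteq> {}" if \<F>: "finite \<F>" "\<F> \<subseteq> range C" for \<F>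
  proof -
    obtain I where I: "finite I" "\<F> = C ` I"
      using finite_subset_image[OF \<F>] by auto
    obtain M where M: "I \<subseteq> {..<M}"
      using finite_nat_bounded[OF I(1)] by blast
    have "C M \<subseteq> C m" if "m \<in> I" for m
      using M that by (intro decseqD[OF dec]) auto
    then have "C M \<subseteq> \<Inter>\<F>"
      using I(2) by auto
    then show ?thesis
      using meets[of M] by auto
  qed
  moreover have "\<forall>S\<in>range C. closedin X S"
    using closed by auto
  ultimately show ?thesis
    using K unfolding compactin_fip by (elim conjE allE) (erule mp, blast)
qed

lemma closed_image_compactin_weak:
  fixes A :: "'a \<Rightarrow> 'b::real_inner"
  assumes K: "compactin X K" and A: "continuous_map X weak_topology A"
  shows "closed (A ` K)"
proof -
  have "b \<in> A ` K" if b: "b \<in> closure (A ` K)" for b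
  proof -
    define C where "C n = {z \<in> topspace X. A z \<in> cball b (1 / Suc n)}" for n
    have "closedin X (C n)" for n
      unfolding C_def by (rule closedin_continuous_map_preimage[OF A closedin_weak_cball])
    moreover have "decseq C"
    proof (rule decseq_SucI)
      fix n
      have "1 / Suc (Suc n) \<le> 1 / real (Suc n)"
        by (simp add: frac_le)
      then show "C (Suc n) \<subseteq> C n"
        unfolding C_def using subset_cball by blast
    qed
    moreover have "K \<inter> C n \<noteq> {}" for n
    proof -
      have "(0::real) < 1 / Suc n"
        by simp
      then obtain y where "y \<in> K" "dist (A y) b < 1 / Suc n"
        using b unfolding closure_approachable by blast
      then show ?thesis
        using compactin_subset_topspace[OF K] by (auto simp: C_def dist_commute)
    qed
    ultimately have "K \<inter> \<Inter>(range C) \<noteq> {}"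
      by (rule compactin_Int_Inter_decseq_nonempty[OF K])
    then obtain z where z: "z \<in> K" "\<And>n. z \<in> C n"
      by auto
    have "dist b (A z) \<le> 0 + e" if "0 < e" for e
    proof -
      obtain n where "inverse (Suc n) < e"
        using reals_Archimedean[OF \<open>0 < e\<close>] by blast
      moreover have "dist b (A z) \<le> inverse (Suc n)"
        using z(2)[of n] by (simp add: C_def inverse_eq_divide)
      ultimately show ?thesis
        by simp
    qed
    then have "A z = b"
      using field_le_epsilon[of "dist b (A z)" 0] by simp
    then show ?thesis
      using z(1) by blast
  qed
  then show ?thesis
    using closure_subset_eq by blast
qed

lemma eventually_gt_at_minimal_preimage:
  fixes R :: "'a \<Rightarrow> ereal" and A :: "'a \<Rightarrow> 'b::real_inner"
  assumes sublevel: "\<And>l::real. compactin X {z. R z \<le> ereal l}"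
    and A: "continuous_map X weak_topology A"
    and minimal: "\<And>z. A z = A x \<Longrightarrow> R x \<le> R z"
    and lim: "((\<lambda>i. A (y i)) \<longlongrightarrow> A x) F"
    and below: "ereal l < R x"
  shows "eventually (\<lambda>i. ereal l < R (y i)) F"
proof (rule ccontr)
  define K where "K = {z. R z \<le> ereal l}"
  assume "\<not> ?thesis"
  then have often: "frequently (\<lambda>i. y i \<in> K) F"
    by (simp add: not_eventually K_def not_less)
  have "A x \<in> closure (A ` K)"
    unfolding closure_approachable
  proof (intro allI impI)
    fix e :: real assume "e > 0"
    then have "eventually (\<lambda>i. dist (A (y i)) (A x) < e) F"
      by (rule tendstoD[OF lim])
    then obtain i where "y i \<in> K" "dist (A (y i)) (A x) < e"
      using frequently_ex[OF frequently_eventually_conj[OF often]] by blast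
    then show "\<exists>b\<in>A ` K. dist b (A x) < e"
      by blast
  qed
  then have "A x \<in> A ` K"
    using closure_closed[OF closed_image_compactin_weak[OF sublevel A]] unfolding K_def by simp
  then obtain z where "z \<in> K" "A z = A x"
    by (metis imageE)
  then show False
    using minimal[of z] below by (simp add: K_def)
qed

lemma tendsto_diff_one_divide_one_minus_powr:
  fixes s :: real
  assumes "s > 0"
  shows "((\<lambda>q. (q - 1) / (1 - q powr - s)) \<longlongrightarrow> 1 / s) (at_right 1)"
proof -
  have "((\<lambda>q. q powr - s) has_real_derivative - s) (at 1)"
    using has_real_derivative_powr[of 1 "- s"] by simp
  then have "((\<lambda>q. (q powr - s - 1) / (q - 1)) \<longlongrightarrow> - s) (at 1)"
    unfolding has_field_derivative_iff by simp
  then have "((\<lambda>q. - 1 / ((q powr - s - 1) / (q - 1))) \<longlongrightarrow> - 1 / - s) (at 1)"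
    by (rule tendsto_divide[OF tendsto_const]) (use assms in simp)
  moreover have "- 1 / ((q powr - s - 1) / (q - 1)) = (q - 1) / (1 - q powr - s)" for q :: real
    by (simp add: divide_divide_eq_right) (metis minus_diff_eq minus_divide_divide)
  ultimately have "((\<lambda>q. (q - 1) / (1 - q powr - s)) \<longlongrightarrow> 1 / s) (at 1)"
    by simp
  then show ?thesis
    by (rule tendsto_mono[OF at_le, rotated]) simp
qed

text \<open>
  The comparison hypothesis on \<open>\<Phi>\<close> is what one obtains for the minimal Tikhonov value by
  using the minimiser at \<open>\<alpha>\<close> as a competitor at \<open>\<beta>\<close>, with \<open>D\<close> the residual.
\<close>

lemma value_step_bound:
  fixes \<Phi> D :: "real \<Rightarrow> real"
  assumes q: "1 < q" and \<alpha>: "0 < \<alpha>"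
    and compare: "\<And>\<alpha> \<beta>. 0 < \<alpha> \<Longrightarrow> 0 < \<beta> \<Longrightarrow> \<Phi> \<beta> \<le> \<Phi> \<alpha> + (1 / (2 * \<beta>) - 1 / (2 * \<alpha>)) * (D \<alpha>)\<^sup>2"
    and D_bound: "\<And>\<alpha>. 0 < \<alpha> \<Longrightarrow> \<bar>D \<alpha>\<bar> \<le> c * \<alpha> powr \<nu>"
  shows "\<Phi> (\<alpha> / q) - \<Phi> \<alpha> \<le> c\<^sup>2 / 2 * (q - 1) * \<alpha> powr (2 * \<nu> - 1)"
proof -
  have "1 / (2 * (\<alpha> / q)) - 1 / (2 * \<alpha>) = (q - 1) / (2 * \<alpha>)"
    using \<alpha> q by (simp add: field_simps)
  then have "\<Phi> (\<alpha> / q) - \<Phi> \<alpha> \<le> (q - 1) / (2 * \<alpha>) * (D \<alpha>)\<^sup>2"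
    using compare[of \<alpha> "\<alpha> / q"] \<alpha> q by simp
  also have "\<dots> \<le> (q - 1) / (2 * \<alpha>) * (c * \<alpha> powr \<nu>)\<^sup>2"
    using power_mono[OF D_bound[OF \<alpha>] abs_ge_zero, of 2] q \<alpha> by (intro mult_left_mono) auto
  also have "\<dots> = c\<^sup>2 / 2 * (q - 1) * \<alpha> powr (2 * \<nu> - 1)"
  proof -
    have "(\<alpha> powr \<nu>)\<^sup>2 = \<alpha> powr (\<nu> + \<nu>)"
      by (simp only: power2_eq_square powr_add)
    also have "\<nu> + \<nu> = (2 * \<nu> - 1) + 1"
      by simp
    also have "\<alpha> powr ((2 * \<nu> - 1) + 1) = \<alpha> powr (2 * \<nu> - 1) * \<alpha>"
      using \<alpha> by (simp only: powr_add) simp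
    finally have "(\<alpha> powr \<nu>)\<^sup>2 = \<alpha> powr (2 * \<nu> - 1) * \<alpha>" .
    then show ?thesis
      using \<alpha> by (simp add: powr_add power_mult_distrib field_simps)
  qed
  finally show ?thesis .
qed

lemma value_gap_bound_geometric:
  fixes \<Phi> D :: "real \<Rightarrow> real"
  assumes \<nu>: "1 / 2 < \<nu>" and q: "1 < q" and \<alpha>: "0 < \<alpha>"
    and compare: "\<And>\<alpha> \<beta>. 0 < \<alpha> \<Longrightarrow> 0 < \<beta> \<Longrightarrow> \<Phi> \<beta> \<le> \<Phi> \<alpha> + (1 / (2 * \<beta>) - 1 / (2 * \<alpha>)) * (D \<alpha>)\<^sup>2"
    and D_bound: "\<And>\<alpha>. 0 < \<alpha> \<Longrightarrow> \<bar>D \<alpha>\<bar> \<le> c * \<alpha> powr \<nu>"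
    and lower: "\<And>\<epsilon>. 0 < \<epsilon> \<Longrightarrow> eventually (\<lambda>\<beta>. L - \<epsilon> < \<Phi> \<beta>) (at_right 0)"
  shows "L - \<Phi> \<alpha> \<le> c\<^sup>2 / 2 * \<alpha> powr (2 * \<nu> - 1) * ((q - 1) / (1 - q powr - (2 * \<nu> - 1)))"
proof -
  define s where "s = 2 * \<nu> - 1"
  define r where "r = q powr - s"
  define a where "a = (\<lambda>k::nat. \<alpha> / q ^ k)"
  have r: "0 < r" "r < 1"
    using \<nu> q by (auto simp: s_def r_def intro: powr_less_one)
  have a_pos: "0 < a k" for k
    using \<alpha> q by (simp add: a_def)
  have step: "\<Phi> (a (Suc k)) - \<Phi> (a k) \<le> c\<^sup>2 / 2 * \<alpha> powr s * (q - 1) * r ^ k" for k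
  proof -
    have "a (Suc k) = a k / q"
      by (simp add: a_def)
    then have "\<Phi> (a (Suc k)) - \<Phi> (a k) \<le> c\<^sup>2 / 2 * (q - 1) * a k powr s"
      using value_step_bound[OF q a_pos compare D_bound] by (simp add: s_def)
    also have "a k powr s = \<alpha> powr s / (q ^ k) powr s"
      by (simp add: a_def powr_divide)
    also have "(q ^ k) powr s = q powr (k * s)"
      using q by (simp add: powr_powr flip: powr_realpow)
    also have "\<alpha> powr s / q powr (k * s) = \<alpha> powr s * r ^ k"
      using q by (simp add: r_def divide_inverse powr_power flip: powr_minus)
    finally show ?thesis
      by (simp add: mult_ac)
  qed
  have telescope: "\<Phi> (a N) - \<Phi> \<alpha> \<le> c\<^sup>2 / 2 * \<alpha> powr s * ((q - 1) / (1 - r))" for N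
  proof -
    have "\<Phi> (a N) - \<Phi> \<alpha> = (\<Sum>k<N. \<Phi> (a (Suc k)) - \<Phi> (a k))"
      using sum_lessThan_telescope[of "\<lambda>k. \<Phi> (a k)" N] by (simp add: a_def)
    also have "\<dots> \<le> (\<Sum>k<N. c\<^sup>2 / 2 * \<alpha> powr s * (q - 1) * r ^ k)"
      by (intro sum_mono step)
    also have "\<dots> = c\<^sup>2 / 2 * \<alpha> powr s * (q - 1) * ((1 - r ^ N) / (1 - r))"
      using r by (simp only: sum_gp_strict flip: sum_distrib_left) simp
    also have "\<dots> \<le> c\<^sup>2 / 2 * \<alpha> powr s * (q - 1) * (1 / (1 - r))"
      using r q by (intro mult_left_mono divide_right_mono) auto
    finally show ?thesis
      by simp
  qed
  have a_lim: "filterlim a (at_right 0) sequentially"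
  proof (rule tendsto_imp_filterlim_at_right)
    have "(\<lambda>k. \<alpha> * inverse q ^ k) \<longlonglongrightarrow> \<alpha> * 0"
      using q by (intro tendsto_mult tendsto_const LIMSEQ_power_zero) (auto simp: inverse_less_1_iff)
    then show "a \<longlonglongrightarrow> 0"
      by (simp add: a_def power_inverse divide_inverse)
  qed (simp add: a_pos)
  have "L - \<Phi> \<alpha> \<le> c\<^sup>2 / 2 * \<alpha> powr s * ((q - 1) / (1 - r)) + \<epsilon>" if "0 < \<epsilon>" for \<epsilon>
  proof -
    have "eventually (\<lambda>k. L - \<epsilon> < \<Phi> (a k)) sequentially"
      using eventually_compose_filterlim[OF lower[OF that] a_lim] .
    then obtain N where "L - \<epsilon> < \<Phi> (a N)"
      unfolding eventually_sequentially by blast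
    then show ?thesis
      using telescope[of N] by linarith
  qed
  then show ?thesis
    unfolding s_def r_def by (rule field_le_epsilon)
qed

lemma value_gap_bound:
  fixes \<Phi> D :: "real \<Rightarrow> real"
  assumes \<nu>: "1 / 2 < \<nu>" and \<alpha>: "0 < \<alpha>"
    and compare: "\<And>\<alpha> \<beta>. 0 < \<alpha> \<Longrightarrow> 0 < \<beta> \<Longrightarrow> \<Phi> \<beta> \<le> \<Phi> \<alpha> + (1 / (2 * \<beta>) - 1 / (2 * \<alpha>)) * (D \<alpha>)\<^sup>2"
    and D_bound: "\<And>\<alpha>. 0 < \<alpha> \<Longrightarrow> \<bar>D \<alpha>\<bar> \<le> c * \<alpha> powr \<nu>"
    and lower: "\<And>\<epsilon>. 0 < \<epsilon> \<Longrightarrow> eventually (\<lambda>\<beta>. L - \<epsilon> < \<Phi> \<beta>) (at_right 0)"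
  shows "L - \<Phi> \<alpha> \<le> c\<^sup>2 / (4 * \<nu> - 2) * \<alpha> powr (2 * \<nu> - 1)"
proof -
  let ?s = "2 * \<nu> - 1"
  have "((\<lambda>q. c\<^sup>2 / 2 * \<alpha> powr ?s * ((q - 1) / (1 - q powr - ?s))) \<longlongrightarrow> c\<^sup>2 / 2 * \<alpha> powr ?s * (1 / ?s)) (at_right 1)"
    using \<nu> by (intro tendsto_mult tendsto_const tendsto_diff_one_divide_one_minus_powr) simp
  moreover have "eventually (\<lambda>q. L - \<Phi> \<alpha> \<le> c\<^sup>2 / 2 * \<alpha> powr ?s * ((q - 1) / (1 - q powr - ?s))) (at_right 1)"
    by (rule eventually_mono[OF eventually_at_right_less])
      (rule value_gap_bound_geometric[OF \<nu> _ \<alpha> compare D_bound lower])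
  ultimately have "L - \<Phi> \<alpha> \<le> c\<^sup>2 / 2 * \<alpha> powr ?s * (1 / ?s)"
    by (intro tendsto_lowerbound) auto
  then show ?thesis
    by (simp add: field_simps)
qed

lemma proper_fun_effdom_eq_ereal:
  assumes "proper_fun R" and "z \<in> effdom R"
  shows "R z = ereal (real_of_ereal (R z))"
  using assms by (cases "R z") (auto simp: proper_fun_def effdom_def)

lemma tik_argmin_convex_competitor:
  fixes R :: "'a::real_vector \<Rightarrow> ereal" and A :: "'a \<Rightarrow> 'b::real_normed_vector"
  assumes R_proper: "proper_fun R" and R_convex: "convex_ereal_fun R" and A: "linear A"
    and x: "x \<in> effdom R" and y: "y \<in> tik_argmin R A \<alpha> (A x)" and t: "0 < t" "t < 1"
  shows "(2 - t) * ((norm (A x - A y))\<^sup>2 / (2 * \<alpha>)) \<le> real_of_ereal (R x) - real_of_ereal (R y)"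
proof -
  define a where "a = (norm (A x - A y))\<^sup>2 / (2 * \<alpha>)"
  define z where "z = (1 - t) *\<^sub>R y + t *\<^sub>R x"
  have y_dom: "y \<in> effdom R"
    using y by (simp add: tik_argmin_def)
  obtain rx ry where Rx: "R x = ereal rx" and Ry: "R y = ereal ry"
    using proper_fun_effdom_eq_ereal[OF R_proper] x y_dom by blast
  have "R z \<le> ereal (1 - t) * R y + ereal t * R x"
    using R_convex t unfolding convex_ereal_fun_def z_def by blast
  then have Rz: "R z \<le> ereal ((1 - t) * ry + t * rx)"
    by (simp add: Rx Ry)
  then have z_dom: "z \<in> effdom R"
    unfolding effdom_def by (auto intro: le_less_trans)
  then obtain rz where Rz_eq: "R z = ereal rz"
    using proper_fun_effdom_eq_ereal[OF R_proper] by blast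
  have "A z = (1 - t) *\<^sub>R A y + t *\<^sub>R A x"
    using A by (simp add: z_def linear_add linear_scale)
  then have "A x - A z = (1 - t) *\<^sub>R (A x - A y)"
    by (simp add: algebra_simps)
  then have "(norm (A x - A z))\<^sup>2 / (2 * \<alpha>) = (1 - t)\<^sup>2 * a"
    using t by (simp add: a_def power_mult_distrib)
  moreover have "tikhonov R A \<alpha> y (A x) \<le> tikhonov R A \<alpha> z (A x)"
    using y z_dom by (simp add: tik_argmin_def)
  then have "a + ry \<le> (norm (A x - A z))\<^sup>2 / (2 * \<alpha>) + rz"
    by (simp add: tikhonov_def a_def Ry Rz_eq)
  ultimately have "a + ry \<le> (1 - t)\<^sup>2 * a + rz"
    by simp
  moreover have "rz \<le> (1 - t) * ry + t * rx"
    using Rz by (simp add: Rz_eq)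
  moreover have "t * ((2 - t) * a) = a - (1 - t)\<^sup>2 * a" and "t * (rx - ry) = t * rx - t * ry"
    by (simp_all add: algebra_simps power2_eq_square)
  ultimately have "t * ((2 - t) * a) \<le> t * (rx - ry)"
    by (simp add: algebra_simps)
  then show ?thesis
    using mult_left_le_imp_le[OF _ t(1)] by (simp add: a_def Rx Ry)
qed

lemma tik_argmin_residual_le:
  fixes R :: "'a::real_vector \<Rightarrow> ereal" and A :: "'a \<Rightarrow> 'b::real_normed_vector"
  assumes R_proper: "proper_fun R" and R_convex: "convex_ereal_fun R" and A: "linear A"
    and x: "x \<in> effdom R" and y: "y \<in> tik_argmin R A \<alpha> (A x)"
  shows "(norm (A x - A y))\<^sup>2 / \<alpha> \<le> real_of_ereal (R x) - real_of_ereal (R y)"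
proof -
  let ?a = "(norm (A x - A y))\<^sup>2 / (2 * \<alpha>)"
  have "eventually (\<lambda>t. (2 - t) * ?a \<le> real_of_ereal (R x) - real_of_ereal (R y)) (at_right 0)"
    using tik_argmin_convex_competitor[OF R_proper R_convex A x y]
    by (intro eventually_at_rightI[of 0 1]) auto
  moreover have "((\<lambda>t. (2 - t) * ?a) \<longlongrightarrow> (2 - 0) * ?a) (at_right 0)"
    by (intro tendsto_intros)
  ultimately have "(2 - 0) * ?a \<le> real_of_ereal (R x) - real_of_ereal (R y)"
    by (intro tendsto_upperbound) auto
  then show ?thesis
    by simp
qed

lemma le_powr_plus_quadratic_imp_le:
  fixes L c d \<nu> :: real
  assumes \<nu>: "0 < \<nu>" and c: "0 < c" and d: "0 < d"
    and L: "\<And>\<alpha>. 0 < \<alpha> \<Longrightarrow> L \<le> c * \<alpha> powr (2 * \<nu> - 1) + d\<^sup>2 / (2 * \<alpha>)"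
  shows "L \<le> 2 * c powr (1 / (2 * \<nu>)) * d powr ((2 * \<nu> - 1) / \<nu>)"
proof -
  define \<alpha> where "\<alpha> = (d\<^sup>2 / c) powr (1 / (2 * \<nu>))"
  have \<alpha>: "0 < \<alpha>"
    using c d by (simp add: \<alpha>_def)
  have "c * \<alpha> powr (2 * \<nu> - 1) = c * \<alpha> powr (2 * \<nu>) / \<alpha>"
    using \<alpha> by (simp add: powr_diff)
  also have "\<alpha> powr (2 * \<nu>) = d\<^sup>2 / c"
    using \<nu> c d by (simp add: \<alpha>_def powr_powr)
  finally have balance: "c * \<alpha> powr (2 * \<nu> - 1) = d\<^sup>2 / \<alpha>"
    using c by simp
  have d_sq_div: "d\<^sup>2 / \<alpha> = c powr (1 / (2 * \<nu>)) * d powr ((2 * \<nu> - 1) / \<nu>)"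
  proof -
    have "d\<^sup>2 / \<alpha> = (d powr 2) powr (1 - 1 / (2 * \<nu>)) * c powr (1 / (2 * \<nu>))"
      using c d by (simp add: \<alpha>_def powr_divide powr_diff powr_numeral field_simps)
    also have "(d powr 2) powr (1 - 1 / (2 * \<nu>)) = d powr (2 * (1 - 1 / (2 * \<nu>)))"
      by (simp add: powr_powr)
    also have "2 * (1 - 1 / (2 * \<nu>)) = (2 * \<nu> - 1) / \<nu>"
      using \<nu> by (simp add: field_simps)
    finally show ?thesis
      by simp
  qed
  have "L \<le> c * \<alpha> powr (2 * \<nu> - 1) + d\<^sup>2 / (2 * \<alpha>)"
    by (rule L[OF \<alpha>])
  also have "\<dots> = d\<^sup>2 / \<alpha> + d\<^sup>2 / (2 * \<alpha>)"
    by (simp add: balance)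
  also have "\<dots> \<le> 2 * (d\<^sup>2 / \<alpha>)"
    using \<alpha> by (simp add: field_simps)
  finally show ?thesis
    by (simp add: d_sq_div)
qed

lemma sq_div_le_powr_imp_le:
  fixes d c \<alpha> \<nu> :: real
  assumes \<nu>: "0 < \<nu>" and \<alpha>: "0 < \<alpha>" and d: "0 \<le> d"
    and le: "d\<^sup>2 / \<alpha> \<le> c * d powr ((2 * \<nu> - 1) / \<nu>)"
  shows "d \<le> c powr \<nu> * \<alpha> powr \<nu>"
proof (cases "d = 0")
  case False
  then have d: "0 < d"
    using d by simp
  have "d powr 2 \<le> \<alpha> * c * d powr ((2 * \<nu> - 1) / \<nu>)"
    using le \<alpha> d by (simp add: powr_numeral divide_le_eq mult_ac)
  then have "d powr 2 / d powr ((2 * \<nu> - 1) / \<nu>) \<le> \<alpha> * c"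
    using d by (simp add: divide_le_eq)
  moreover have "2 - (2 * \<nu> - 1) / \<nu> = 1 / \<nu>"
    using \<nu> by (simp add: field_simps)
  ultimately have "d powr (1 / \<nu>) \<le> \<alpha> * c"
    by (simp flip: powr_diff)
  then have "(d powr (1 / \<nu>)) powr \<nu> \<le> (\<alpha> * c) powr \<nu>"
    using \<nu> d by (intro powr_mono2) auto
  then show ?thesis
    using \<nu> d \<alpha> by (simp add: powr_powr powr_mult mult.commute)
qed simp

locale tikhonov_selection =
  fixes R :: "'a::real_vector \<Rightarrow> ereal" and A :: "'a \<Rightarrow> 'b::real_inner"
    and x :: 'a and xa :: "real \<Rightarrow> 'a"
  assumes R_proper: "proper_fun R"
    and x_dom: "x \<in> effdom R"
    and x_minimal: "\<And>z. A z = A x \<Longrightarrow> R x \<le> R z"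
    and xa_argmin: "\<And>\<alpha>. 0 < \<alpha> \<Longrightarrow> xa \<alpha> \<in> tik_argmin R A \<alpha> (A x)"
begin

definition min_value :: "real \<Rightarrow> real" where
  "min_value \<alpha> = (norm (A x - A (xa \<alpha>)))\<^sup>2 / (2 * \<alpha>) + real_of_ereal (R (xa \<alpha>))"

lemma xa_dom: "0 < \<alpha> \<Longrightarrow> xa \<alpha> \<in> effdom R"
  using xa_argmin by (simp add: tik_argmin_def)

lemma R_eq_ereal: "z \<in> effdom R \<Longrightarrow> R z = ereal (real_of_ereal (R z))"
  by (rule proper_fun_effdom_eq_ereal[OF R_proper])

lemma R_diff_eq: "z \<in> effdom R \<Longrightarrow> R x - R z = ereal (real_of_ereal (R x) - real_of_ereal (R z))"
  by (subst R_eq_ereal[OF x_dom], subst R_eq_ereal) simp_all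

lemma min_value_le:
  assumes "0 < \<alpha>" and "z \<in> effdom R"
  shows "min_value \<alpha> \<le> (norm (A x - A z))\<^sup>2 / (2 * \<alpha>) + real_of_ereal (R z)"
proof -
  have "tikhonov R A \<alpha> (xa \<alpha>) (A x) \<le> tikhonov R A \<alpha> z (A x)"
    using xa_argmin[OF assms(1)] assms(2) by (simp add: tik_argmin_def)
  then show ?thesis
    unfolding tikhonov_def min_value_def
    by (subst (asm) R_eq_ereal[OF xa_dom[OF assms(1)]], subst (asm) R_eq_ereal[OF assms(2)]) simp
qed

lemma tik_defect_eq:
  assumes "0 < \<alpha>"
  shows "tik_defect R A x xa \<alpha> = ereal (real_of_ereal (R x) - min_value \<alpha>)"
  unfolding tik_defect_def tikhonov_def min_value_def
  by (subst (1 2) R_eq_ereal[OF x_dom], subst R_eq_ereal[OF xa_dom[OF assms]]) simp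

lemma residual_rate_imp_defect_rate:
  assumes sublevel: "\<And>l::real. compactin X {z. R z \<le> ereal l}"
    and A_cont: "continuous_map X weak_topology A"
    and \<nu>: "1 / 2 < \<nu>"
    and rate: "\<And>\<alpha>. 0 < \<alpha> \<Longrightarrow> norm (A x - A (xa \<alpha>)) \<le> c * \<alpha> powr \<nu>"
    and \<alpha>: "0 < \<alpha>"
  shows "tik_defect R A x xa \<alpha> \<le> ereal (c\<^sup>2 / (4 * \<nu> - 2) * \<alpha> powr (2 * \<nu> - 1))"
proof -
  have "((\<lambda>\<beta>. A (xa \<beta>) - A x) \<longlongrightarrow> 0) (at_right 0)"
  proof (rule Lim_null_comparison)
    show "eventually (\<lambda>\<beta>. norm (A (xa \<beta>) - A x) \<le> c * \<beta> powr \<nu>) (at_right 0)"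
      using rate eventually_at_right_less[of "0::real"]
      by (auto elim: eventually_mono simp: norm_minus_commute)
    have "eventually (\<lambda>\<beta>. 0 \<le> \<beta>) (at_right (0::real))"
      by (rule eventually_at_rightI[of 0 1]) auto
    then have "((\<lambda>\<beta>. \<beta> powr \<nu>) \<longlongrightarrow> 0) (at_right 0)"
      using \<nu> by (intro tendsto_zero_powrI tendsto_ident_at tendsto_const) auto
    then show "((\<lambda>\<beta>. c * \<beta> powr \<nu>) \<longlongrightarrow> 0) (at_right 0)"
      by (rule tendsto_mult_right_zero)
  qed
  then have lim: "((\<lambda>\<beta>. A (xa \<beta>)) \<longlongrightarrow> A x) (at_right 0)"
    by (simp add: Lim_null[of _ "A x"])
  have "eventually (\<lambda>\<beta>. real_of_ereal (R x) - \<epsilon> < min_value \<beta>) (at_right 0)" if "0 < \<epsilon>" for \<epsilon>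
  proof -
    have below: "ereal (real_of_ereal (R x) - \<epsilon>) < R x"
      using that by (subst R_eq_ereal[OF x_dom]) simp
    have "eventually (\<lambda>\<beta>. ereal (real_of_ereal (R x) - \<epsilon>) < R (xa \<beta>)) (at_right 0)"
      by (rule eventually_gt_at_minimal_preimage[OF sublevel A_cont x_minimal lim below])
    then show ?thesis
      using eventually_at_right_less[of "0::real"]
    proof eventually_elim
      case (elim \<beta>)
      then have "real_of_ereal (R x) - \<epsilon> < real_of_ereal (R (xa \<beta>))"
        by (subst (asm) R_eq_ereal[OF xa_dom[OF elim(2)]]) simp
      moreover have "0 \<le> (norm (A x - A (xa \<beta>)))\<^sup>2 / (2 * \<beta>)"
        using elim(2) by simp
      ultimately show ?case
        by (simp add: min_value_def)
    qed
  qed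
  moreover have "min_value \<beta> \<le> min_value \<alpha> + (1 / (2 * \<beta>) - 1 / (2 * \<alpha>)) * (norm (A x - A (xa \<alpha>)))\<^sup>2"
    if "0 < \<alpha>" "0 < \<beta>" for \<alpha> \<beta>
    using min_value_le[OF that(2) xa_dom[OF that(1)]] by (simp add: min_value_def algebra_simps)
  ultimately have "real_of_ereal (R x) - min_value \<alpha> \<le> c\<^sup>2 / (4 * \<nu> - 2) * \<alpha> powr (2 * \<nu> - 1)"
    using value_gap_bound[OF \<nu> \<alpha>, of min_value "\<lambda>\<beta>. norm (A x - A (xa \<beta>))"] rate by auto
  then show ?thesis
    by (simp add: tik_defect_eq[OF \<alpha>])
qed

lemma defect_rate_imp_variational_inequality:
  assumes \<nu>: "0 < \<nu>" and c: "0 < c"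
    and rate: "\<And>\<alpha>. 0 < \<alpha> \<Longrightarrow> tik_defect R A x xa \<alpha> \<le> ereal (c * \<alpha> powr (2 * \<nu> - 1))"
  shows "R x - R z \<le> ereal (2 * c powr (1 / (2 * \<nu>)) * norm (A x - A z) powr ((2 * \<nu> - 1) / \<nu>))"
proof (cases "z \<in> effdom R")
  case False
  then show ?thesis
    by (subst R_eq_ereal[OF x_dom]) (simp add: effdom_def)
next
  case z_dom: True
  show ?thesis
  proof (cases "A z = A x")
    case True
    have "real_of_ereal (R x) \<le> real_of_ereal (R z)"
      using x_minimal[OF True] R_eq_ereal[OF x_dom] R_eq_ereal[OF z_dom] by (metis ereal_less_eq(3))
    then show ?thesis
      using True by (simp add: R_diff_eq[OF z_dom])
  next
    case False
    have "real_of_ereal (R x) - real_of_ereal (R z)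
        \<le> c * \<alpha> powr (2 * \<nu> - 1) + (norm (A x - A z))\<^sup>2 / (2 * \<alpha>)" if "0 < \<alpha>" for \<alpha>
      using rate[OF that] min_value_le[OF that z_dom] by (simp add: tik_defect_eq[OF that])
    then have "real_of_ereal (R x) - real_of_ereal (R z)
        \<le> 2 * c powr (1 / (2 * \<nu>)) * norm (A x - A z) powr ((2 * \<nu> - 1) / \<nu>)"
      using False by (intro le_powr_plus_quadratic_imp_le[OF \<nu> c]) auto
    then show ?thesis
      by (simp add: R_diff_eq[OF z_dom])
  qed
qed

lemma variational_inequality_imp_residual_rate:
  assumes R_convex: "convex_ereal_fun R" and A_lin: "linear A" and \<nu>: "0 < \<nu>"
    and source: "\<And>z. R x - R z \<le> ereal (c * norm (A x - A z) powr ((2 * \<nu> - 1) / \<nu>))"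
    and \<alpha>: "0 < \<alpha>"
  shows "norm (A x - A (xa \<alpha>)) \<le> c powr \<nu> * \<alpha> powr \<nu>"
proof (rule sq_div_le_powr_imp_le[OF \<nu> \<alpha> norm_ge_zero])
  have "(norm (A x - A (xa \<alpha>)))\<^sup>2 / \<alpha> \<le> real_of_ereal (R x) - real_of_ereal (R (xa \<alpha>))"
    by (rule tik_argmin_residual_le[OF R_proper R_convex A_lin x_dom xa_argmin[OF \<alpha>]])
  also have "\<dots> \<le> c * norm (A x - A (xa \<alpha>)) powr ((2 * \<nu> - 1) / \<nu>)"
    using source[of "xa \<alpha>"] by (simp add: R_diff_eq[OF xa_dom[OF \<alpha>]])
  finally show "(norm (A x - A (xa \<alpha>)))\<^sup>2 / \<alpha> \<le> c * norm (A x - A (xa \<alpha>)) powr ((2 * \<nu> - 1) / \<nu>)" .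
qed

end

theorem theorem3:
  fixes \<tau> :: "('a::banach) topology"
    and R :: "'a \<Rightarrow> ereal"
    and A :: "'a \<Rightarrow> 'b::{real_inner, complete_space}"
    and \<nu> :: real and x :: 'a and xa :: "real \<Rightarrow> 'a"
  assumes tau: "locally_convex_hausdorff \<tau>"
    and R_proper: "proper_fun R"
    and R_convex: "convex_ereal_fun R"
    and R_sublevel: "\<And>l::real. compactin \<tau> {z. R z \<le> ereal l}"
    and A_lin: "linear A"
    and A_cont: "continuous_map \<tau> weak_topology A"
    and nu: "1/2 < \<nu>" "\<nu> \<le> 1"
    and x_dom: "x \<in> effdom R"
    and x_min: "R x = (INF z \<in> {z. A z = A x}. R z)"
    and xa: "\<And>\<alpha>. \<alpha> > 0 \<Longrightarrow> xa \<alpha> \<in> tik_argmin R A \<alpha> (A x)"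
  defines "P1 \<equiv> \<lambda>c1. \<forall>\<alpha>>0. norm (A x - A (xa \<alpha>)) \<le> c1 * \<alpha> powr \<nu>"
    and "P2 \<equiv> \<lambda>c2. \<forall>\<alpha>>0. tik_defect R A x xa \<alpha> \<le> ereal (c2 * \<alpha> powr (2 * \<nu> - 1))"
    and "P3 \<equiv> \<lambda>c3. \<forall>z. R x - R z \<le> ereal (c3 * norm (A x - A z) powr ((2 * \<nu> - 1) / \<nu>))"
  shows "((\<exists>c1>0. P1 c1) \<longleftrightarrow> (\<exists>c2>0. P2 c2)) \<and>
         ((\<exists>c2>0. P2 c2) \<longleftrightarrow> (\<exists>c3>0. P3 c3)) \<and>
         (\<forall>c1>0. P1 c1 \<longrightarrow> P2 (c1\<^sup>2 / (4 * \<nu> - 2))) \<and>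
         (\<forall>c2>0. P2 c2 \<longrightarrow> P3 (2 * c2 powr (1 / (2 * \<nu>)))) \<and>
         (\<forall>c3>0. P3 c3 \<longrightarrow> P1 (c3 powr \<nu>))"
proof -
  interpret tikhonov_selection R A x xa
    using R_proper x_dom xa by unfold_locales (auto simp: x_min intro: INF_lower)
  have \<nu>_pos: "0 < \<nu>"
    using nu by simp
  have i_imp_ii: "P1 c \<Longrightarrow> P2 (c\<^sup>2 / (4 * \<nu> - 2))" for c
    unfolding P1_def P2_def using residual_rate_imp_defect_rate[OF R_sublevel A_cont nu(1)] by blast
  have ii_imp_iii: "0 < c \<Longrightarrow> P2 c \<Longrightarrow> P3 (2 * c powr (1 / (2 * \<nu>)))" for c
    unfolding P2_def P3_def using defect_rate_imp_variational_inequality[OF \<nu>_pos] by blast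
  have iii_imp_i: "P3 c \<Longrightarrow> P1 (c powr \<nu>)" for c
    unfolding P3_def P1_def using variational_inequality_imp_residual_rate[OF R_convex A_lin \<nu>_pos] by blast
  have "0 < c\<^sup>2 / (4 * \<nu> - 2)" "0 < 2 * c powr (1 / (2 * \<nu>))" "0 < c powr \<nu>" if "0 < c" for c
    using that nu by auto
  with i_imp_ii ii_imp_iii iii_imp_i show ?thesis
    by meson
qed

end
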